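(* Let $(M_0,d,\Gamma)$ be a cone-like space. Then the metric completion $\widehat{M_0}$ of $(M_0,d)$ satisfies that $\widehat{M_0}\setminus M_0$ consists of exactly one point $\omega$.
   Context: A cone-like space is a locally compact metric space $(M_0,d)$ together with a finitely generated, non-trivial group $\Gamma$ acting freely and properly discontinuously on $M_0$ by homotheties (i.e. for each $f\in\Gamma$ there is $\rho(f)>0$ with $d(f(x),f(y))=\rho(f)d(x,y)$ for all $x,y$), such that the identity is the only element of $\Gamma$ acting as an isometry, and such that the quotient $M_0/\Gamma$ is compact. *)

theory Defs
  imports "HOL-Analysis.Analysis" "HOL-Algebra.Group_Action" "HOL-Algebra.Generated_Groups"
begin

definition acts_by_homotheties :: "('g, 'c) monoid_scheme \<Rightarrow> ('g \<Rightarrow> 'a::metric_space \<Rightarrow> 'a) \<Rightarrow> bool" where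
  "acts_by_homotheties G \<phi> \<longleftrightarrow>
     (\<forall>g \<in> carrier G. \<exists>\<rho>>0. \<forall>x y. dist (\<phi> g x) (\<phi> g y) = \<rho> * dist x y)"

definition acts_freely :: "('g, 'c) monoid_scheme \<Rightarrow> ('g \<Rightarrow> 'a \<Rightarrow> 'a) \<Rightarrow> bool" where
  "acts_freely G \<phi> \<longleftrightarrow> (\<forall>g \<in> carrier G. \<forall>x. \<phi> g x = x \<longrightarrow> g = \<one>\<^bsub>G\<^esub>)"

definition properly_discontinuous :: "('g, 'c) monoid_scheme \<Rightarrow> ('g \<Rightarrow> 'a::topological_space \<Rightarrow> 'a) \<Rightarrow> bool" where
  "properly_discontinuous G \<phi> \<longleftrightarrow>
     (\<forall>K. compact K \<longrightarrow> finite {g \<in> carrier G. \<phi> g ` K \<inter> K \<noteq> {}})"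

definition only_identity_isometry :: "('g, 'c) monoid_scheme \<Rightarrow> ('g \<Rightarrow> 'a::metric_space \<Rightarrow> 'a) \<Rightarrow> bool" where
  "only_identity_isometry G \<phi> \<longleftrightarrow>
     (\<forall>g \<in> carrier G. (\<forall>x y. dist (\<phi> g x) (\<phi> g y) = dist x y) \<longrightarrow> g = \<one>\<^bsub>G\<^esub>)"

definition compact_orbit_space :: "('g, 'c) monoid_scheme \<Rightarrow> ('g \<Rightarrow> 'a::topological_space \<Rightarrow> 'a) \<Rightarrow> bool" where
  "compact_orbit_space G \<phi> \<longleftrightarrow>
     (\<exists>Q. quotient_map (euclidean :: 'a topology) Q (orbit G \<phi>) \<and> compact_space Q)"

definition finitely_generated_group :: "('g, 'c) monoid_scheme \<Rightarrow> bool" where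
  "finitely_generated_group G \<longleftrightarrow>
     (\<exists>S. finite S \<and> S \<subseteq> carrier G \<and> generate G S = carrier G)"

text \<open>Cone-like space: the whole type 'a is M_0.\<close>
definition cone_like :: "('g, 'c) monoid_scheme \<Rightarrow> ('g \<Rightarrow> 'a::metric_space \<Rightarrow> 'a) \<Rightarrow> bool" where
  "cone_like G \<phi> \<longleftrightarrow>
     locally_compact_space (euclidean :: 'a topology) \<and>
     group G \<and> finitely_generated_group G \<and> carrier G \<noteq> {\<one>\<^bsub>G\<^esub>} \<and>
     group_action G (UNIV :: 'a set) \<phi> \<and>
     acts_freely G \<phi> \<and> properly_discontinuous G \<phi> \<and>
     acts_by_homotheties G \<phi> \<and> only_identity_isometry G \<phi> \<and>
     compact_orbit_space G \<phi>"

definition metric_completion :: "('a::metric_space \<Rightarrow> 'b::complete_space) \<Rightarrow> bool" where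
  "metric_completion i \<longleftrightarrow> (\<forall>x y. dist (i x) (i y) = dist x y) \<and> closure (range i) = UNIV"

end

theory Submission
  imports Defs
begin

text \<open>
  The dilation factor \<open>ratio\<close> is an injective homomorphism from \<open>G\<close> to the positive reals,
  so \<open>G\<close> is abelian and contains a strict contraction \<open>f\<close>.  All \<open>f\<close>-orbits converge in the
  completion to one point \<open>\<omega>\<close>, and since every \<open>g\<close> commutes with \<open>f\<close>, distances to \<open>\<omega>\<close> scale:
  \<open>dist (\<phi> g x) \<omega> = ratio g * dist x \<omega>\<close>.  Hence \<open>\<omega>\<close> is not in \<open>M\<close> (it would be a common fixed
  point).  Conversely, cocompactness yields a bounded set \<open>K\<close> whose translates cover \<open>M\<close> and a
  uniform radius of compact balls around \<open>K\<close>; a Cauchy sequence \<open>\<phi> (g n) (k n)\<close> (\<open>k n \<in> K\<close>)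
  staying away from \<open>\<omega>\<close> has dilation factors bounded below, so one translate brings its tail
  into a compact ball and it converges in \<open>M\<close>.
\<close>

section \<open>Contractions and their attracting points\<close>

lemma contraction_iterate_dist:
  fixes T :: "'a::metric_space \<Rightarrow> 'a"
  assumes "0 \<le> r" and lip: "\<And>x y. dist (T x) (T y) \<le> r * dist x y"
  shows "dist ((T ^^ n) x) ((T ^^ n) y) \<le> r ^ n * dist x y"
proof (induction n)
  case 0
  then show ?case by simp
next
  case (Suc n)
  have "dist ((T ^^ Suc n) x) ((T ^^ Suc n) y) \<le> r * dist ((T ^^ n) x) ((T ^^ n) y)"
    using lip by simp
  also have "\<dots> \<le> r * (r ^ n * dist x y)"
    using Suc \<open>0 \<le> r\<close> by (rule mult_left_mono)
  finally show ?case by simp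
qed

lemma contraction_orbit_bounded:
  fixes T :: "'a::metric_space \<Rightarrow> 'a"
  assumes "0 \<le> r" "r < 1" and lip: "\<And>x y. dist (T x) (T y) \<le> r * dist x y"
  shows "dist x ((T ^^ k) x) \<le> dist x (T x) / (1 - r)"
proof (induction k)
  case 0
  show ?case using \<open>r < 1\<close> by simp
next
  case (Suc k)
  have "dist x ((T ^^ Suc k) x) \<le> dist x (T x) + dist (T x) (T ((T ^^ k) x))"
    using dist_triangle[of x "T ((T ^^ k) x)" "T x"] by simp
  also have "\<dots> \<le> dist x (T x) + r * (dist x (T x) / (1 - r))"
    using lip[of x "(T ^^ k) x"] mult_left_mono[OF Suc \<open>0 \<le> r\<close>] by linarith
  also have "\<dots> = dist x (T x) / (1 - r)"
    using \<open>r < 1\<close> by (simp add: field_simps)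
  finally show ?case .
qed

lemma contraction_orbit_Cauchy:
  fixes T :: "'a::metric_space \<Rightarrow> 'a"
  assumes "0 \<le> r" "r < 1" and lip: "\<And>x y. dist (T x) (T y) \<le> r * dist x y"
  shows "Cauchy (\<lambda>n. (T ^^ n) x)"
  unfolding Cauchy_altdef2
proof (intro allI impI)
  fix e :: real assume "0 < e"
  define B where "B = dist x (T x) / (1 - r)"
  have "(\<lambda>n. r ^ n * B) \<longlonglongrightarrow> 0"
    using assms by (intro tendsto_mult_left_zero LIMSEQ_power_zero) auto
  then have "\<forall>\<^sub>F n in sequentially. r ^ n * B < e"
    using \<open>0 < e\<close> by (rule order_tendstoD)
  then obtain N where N: "r ^ N * B < e"
    unfolding eventually_sequentially by blast
  have "dist ((T ^^ n) x) ((T ^^ N) x) < e" if "n \<ge> N" for n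
  proof -
    obtain k where "n = N + k" using \<open>n \<ge> N\<close> le_Suc_ex by blast
    then have "dist ((T ^^ n) x) ((T ^^ N) x) = dist ((T ^^ N) ((T ^^ k) x)) ((T ^^ N) x)"
      by (simp add: funpow_add)
    also have "\<dots> \<le> r ^ N * dist ((T ^^ k) x) x"
      using contraction_iterate_dist[OF \<open>0 \<le> r\<close> lip] .
    also have "\<dots> \<le> r ^ N * B"
      unfolding B_def dist_commute[of "(T ^^ k) x"]
      by (rule mult_left_mono[OF contraction_orbit_bounded[OF assms]]) (simp add: \<open>0 \<le> r\<close>)
    finally show ?thesis using N by linarith
  qed
  then show "\<exists>N. \<forall>n\<ge>N. dist ((T ^^ n) x) ((T ^^ N) x) < e" by blast
qed

lemma contraction_attractor:
  fixes T :: "'a::metric_space \<Rightarrow> 'a" and i :: "'a \<Rightarrow> 'b::complete_space"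
  assumes "0 \<le> r" "r < 1" and lip: "\<And>x y. dist (T x) (T y) \<le> r * dist x y"
    and iso: "\<And>x y. dist (i x) (i y) = dist x y"
  obtains \<omega> where "\<And>x. (\<lambda>n. i ((T ^^ n) x)) \<longlonglongrightarrow> \<omega>"
proof -
  fix a :: 'a
  have "Cauchy (\<lambda>n. i ((T ^^ n) a))"
    using contraction_orbit_Cauchy[OF assms(1-3)] by (simp add: Cauchy_def iso)
  then obtain \<omega> where \<omega>: "(\<lambda>n. i ((T ^^ n) a)) \<longlonglongrightarrow> \<omega>"
    using Cauchy_convergent_iff convergent_def by blast
  have "(\<lambda>n. i ((T ^^ n) x)) \<longlonglongrightarrow> \<omega>" for x
  proof (rule tendsto_dist_iff[THEN iffD2], rule Lim_null_comparison)
    have "norm (dist (i ((T ^^ n) x)) \<omega>) \<le> r ^ n * dist x a + dist (i ((T ^^ n) a)) \<omega>" for n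
    proof -
      have "dist (i ((T ^^ n) x)) \<omega> \<le> dist (i ((T ^^ n) x)) (i ((T ^^ n) a)) + dist (i ((T ^^ n) a)) \<omega>"
        by (rule dist_triangle)
      also have "dist (i ((T ^^ n) x)) (i ((T ^^ n) a)) \<le> r ^ n * dist x a"
        unfolding iso by (rule contraction_iterate_dist[OF \<open>0 \<le> r\<close> lip])
      finally show ?thesis by simp
    qed
    then show "\<forall>\<^sub>F n in sequentially.
        norm (dist (i ((T ^^ n) x)) \<omega>) \<le> r ^ n * dist x a + dist (i ((T ^^ n) a)) \<omega>"
      by (intro always_eventually allI)
    have "(\<lambda>n. dist (i ((T ^^ n) a)) \<omega>) \<longlonglongrightarrow> 0"
      using \<omega> by (rule tendsto_dist_iff[THEN iffD1])
    then show "(\<lambda>n. r ^ n * dist x a + dist (i ((T ^^ n) a)) \<omega>) \<longlonglongrightarrow> 0"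
      using assms by (intro tendsto_add_zero tendsto_mult_left_zero LIMSEQ_power_zero) auto
  qed
  then show ?thesis by (rule that)
qed

lemma locally_compact_cball:
  fixes x :: "'a::metric_space"
  assumes "locally_compact_space (euclidean :: 'a topology)"
  shows "\<exists>t>0. compact (cball x t)"
proof -
  obtain U C where "openin euclidean U" "compactin euclidean C" "x \<in> U" "U \<subseteq> C"
    using assms[unfolded locally_compact_space_def, rule_format, of x] by auto
  then have UC: "open U" "compact C" "x \<in> U" "U \<subseteq> C"
    by simp_all
  obtain t where t: "t > 0" "ball x t \<subseteq> U"
    using UC(1,3) open_contains_ball by blast
  have "cball x (t / 2) \<subseteq> ball x t"
  proof
    fix y assume "y \<in> cball x (t / 2)"
    then show "y \<in> ball x t" using t(1) by simp
  qed
  then have "cball x (t / 2) \<subseteq> C"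
    using t(2) UC(4) by blast
  then have "compact (cball x (t / 2))"
    using compact_Int_closed[OF UC(2) closed_cball[of x "t / 2"]] by (simp add: Int_absorb1)
  then show ?thesis
    using t(1) by (intro exI[of _ "t / 2"]) simp
qed

section \<open>Free actions by homotheties\<close>

locale homothety_action = group_action G "UNIV :: 'a set" \<phi>
  for G :: "('g, 'c) monoid_scheme" (structure) and \<phi> :: "'g \<Rightarrow> 'a::metric_space \<Rightarrow> 'a" +
  assumes homotheties: "acts_by_homotheties G \<phi>"
    and free: "acts_freely G \<phi>"
    and rigid: "only_identity_isometry G \<phi>"
    and nontrivial: "carrier G \<noteq> {\<one>}"
begin

sublocale group G
  using group_hom group_hom.axioms(1) by blast

lemma act_mult: "g \<in> carrier G \<Longrightarrow> h \<in> carrier G \<Longrightarrow> \<phi> (g \<otimes> h) x = \<phi> g (\<phi> h x)"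
  by (simp add: composition_rule)

lemma act_one [simp]: "\<phi> \<one> x = x"
  using id_eq_one by (metis UNIV_I restrict_apply')

lemma act_inv [simp]:
  assumes "g \<in> carrier G"
  shows "\<phi> (inv g) (\<phi> g x) = x" and "\<phi> g (\<phi> (inv g) x) = x"
  using act_mult[of "inv g" g x] act_mult[of g "inv g" x] assms by simp_all

definition ratio :: "'g \<Rightarrow> real" where
  "ratio g = (SOME \<rho>. \<rho> > 0 \<and> (\<forall>x y. dist (\<phi> g x) (\<phi> g y) = \<rho> * dist x y))"

lemma ratio_pos: "g \<in> carrier G \<Longrightarrow> ratio g > 0"
  and dist_act: "g \<in> carrier G \<Longrightarrow> dist (\<phi> g x) (\<phi> g y) = ratio g * dist x y"
proof -
  assume "g \<in> carrier G"
  then have "\<exists>\<rho>. \<rho> > 0 \<and> (\<forall>x y. dist (\<phi> g x) (\<phi> g y) = \<rho> * dist x y)"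
    using homotheties unfolding acts_by_homotheties_def by blast
  from someI_ex[OF this] show "ratio g > 0" "dist (\<phi> g x) (\<phi> g y) = ratio g * dist x y"
    unfolding ratio_def by blast+
qed

text \<open>A free action of a nontrivial group needs at least two points, which makes the dilation
  factor of an element uniquely determined.\<close>
lemma two_points: obtains a b :: 'a where "a \<noteq> b"
proof -
  obtain g where g: "g \<in> carrier G" "g \<noteq> \<one>"
    using nontrivial by blast
  fix a :: 'a
  have "\<phi> g a \<noteq> a"
    using free g unfolding acts_freely_def by blast
  then show ?thesis by (rule that)
qed

lemma ratio_mult:
  assumes "g \<in> carrier G" "h \<in> carrier G"
  shows "ratio (g \<otimes> h) = ratio g * ratio h"
proof -
  obtain a b :: 'a where "a \<noteq> b" by (rule two_points)
  have "ratio (g \<otimes> h) * dist a b = dist (\<phi> g (\<phi> h a)) (\<phi> g (\<phi> h b))"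
    using dist_act[of "g \<otimes> h" a b] assms by (simp add: act_mult)
  also have "\<dots> = ratio g * ratio h * dist a b"
    using assms by (simp add: dist_act)
  finally show ?thesis using \<open>a \<noteq> b\<close> by simp
qed

lemma ratio_one [simp]: "ratio \<one> = 1"
  using ratio_mult[of \<one> \<one>] ratio_pos[of \<one>] by simp

lemma ratio_inv: "g \<in> carrier G \<Longrightarrow> ratio (inv g) = inverse (ratio g)"
  using ratio_mult[of g "inv g"] ratio_pos[of g] by (simp add: field_simps)

lemma ratio_eq_one_imp: "g \<in> carrier G \<Longrightarrow> ratio g = 1 \<Longrightarrow> g = \<one>"
  using rigid dist_act unfolding only_identity_isometry_def by simp

text \<open>Being isomorphic to a subgroup of the positive reals, the group is abelian: a commutator
  has dilation factor \<open>1\<close>.\<close>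
lemma commute:
  assumes "g \<in> carrier G" "h \<in> carrier G"
  shows "g \<otimes> h = h \<otimes> g"
proof -
  have "ratio (g \<otimes> h \<otimes> inv (h \<otimes> g)) = 1"
    using assms ratio_pos[of g] ratio_pos[of h] by (simp add: ratio_mult ratio_inv field_simps)
  then have "g \<otimes> h \<otimes> inv (h \<otimes> g) = \<one>"
    using assms by (intro ratio_eq_one_imp) simp_all
  then have "g \<otimes> h \<otimes> inv (h \<otimes> g) \<otimes> (h \<otimes> g) = h \<otimes> g"
    using assms by simp
  then show ?thesis
    using assms by (simp add: m_assoc)
qed

text \<open>Some element strictly contracts: a nontrivial element or its inverse.\<close>
lemma exists_contraction: obtains f where "f \<in> carrier G" "ratio f < 1"
proof -
  obtain g where g: "g \<in> carrier G" "g \<noteq> \<one>"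
    using nontrivial by blast
  then have "ratio g \<noteq> 1"
    using ratio_eq_one_imp by blast
  show ?thesis
  proof (cases "ratio g < 1")
    case True
    then show ?thesis using g by (intro that)
  next
    case False
    with \<open>ratio g \<noteq> 1\<close> have "1 < ratio g" by simp
    then have "ratio (inv g) < 1"
      using g(1) by (simp add: ratio_inv inverse_less_1_iff)
    then show ?thesis using g by (intro that) simp_all
  qed
qed

lemma act_lipschitz: "g \<in> carrier G \<Longrightarrow> (ratio g)-lipschitz_on S (\<phi> g)"
  by (rule lipschitz_onI) (simp_all add: dist_act less_imp_le ratio_pos)

lemma act_open_image:
  assumes "g \<in> carrier G" "open V"
  shows "open (\<phi> g ` V)"
proof -
  have "\<phi> g ` V = \<phi> (inv g) -` V"
  proof
    show "\<phi> g ` V \<subseteq> \<phi> (inv g) -` V"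
      using assms(1) by auto
    show "\<phi> (inv g) -` V \<subseteq> \<phi> g ` V"
    proof
      fix y assume "y \<in> \<phi> (inv g) -` V"
      then show "y \<in> \<phi> g ` V"
        using act_inv(2)[OF assms(1), of y] by (metis image_eqI vimageD)
    qed
  qed
  then show ?thesis
    using assms by (simp add: open_vimage lipschitz_on_continuous_on[OF act_lipschitz])
qed

lemma orbit_act:
  assumes "g \<in> carrier G"
  shows "orbit G \<phi> (\<phi> g x) = orbit G \<phi> x"
proof
  show "orbit G \<phi> (\<phi> g x) \<subseteq> orbit G \<phi> x"
  proof
    fix y assume "y \<in> orbit G \<phi> (\<phi> g x)"
    then obtain h where h: "h \<in> carrier G" "y = \<phi> h (\<phi> g x)"
      unfolding orbit_def by blast
    then have "y = \<phi> (h \<otimes> g) x" "h \<otimes> g \<in> carrier G"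
      using assms by (simp_all add: act_mult)
    then show "y \<in> orbit G \<phi> x"
      unfolding orbit_def by blast
  qed
  show "orbit G \<phi> x \<subseteq> orbit G \<phi> (\<phi> g x)"
  proof
    fix y assume "y \<in> orbit G \<phi> x"
    then obtain h where h: "h \<in> carrier G" "y = \<phi> h x"
      unfolding orbit_def by blast
    then have "y = \<phi> (h \<otimes> inv g) (\<phi> g x)" "h \<otimes> inv g \<in> carrier G"
      using assms by (simp_all add: act_mult)
    then show "y \<in> orbit G \<phi> (\<phi> g x)"
      unfolding orbit_def by blast
  qed
qed

lemma saturation_eq: "{y. orbit G \<phi> y \<in> orbit G \<phi> ` V} = (\<Union>g\<in>carrier G. \<phi> g ` V)"
proof (intro Set.set_eqI iffI)
  fix y assume "y \<in> {y. orbit G \<phi> y \<in> orbit G \<phi> ` V}"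
  then obtain v where v: "v \<in> V" "orbit G \<phi> y = orbit G \<phi> v"
    by blast
  have "y \<in> orbit G \<phi> v"
    using orbit_refl[of y] v(2) by simp
  then obtain g where "g \<in> carrier G" "y = \<phi> g v"
    unfolding orbit_def by blast
  then show "y \<in> (\<Union>g\<in>carrier G. \<phi> g ` V)"
    using v(1) by blast
next
  fix y assume "y \<in> (\<Union>g\<in>carrier G. \<phi> g ` V)"
  then obtain g v where "g \<in> carrier G" "v \<in> V" "y = \<phi> g v"
    by blast
  then have "orbit G \<phi> y = orbit G \<phi> v" "v \<in> V"
    using orbit_act by simp_all
  then show "y \<in> {y. orbit G \<phi> y \<in> orbit G \<phi> ` V}"
    by (metis imageI mem_Collect_eq)
qed

text \<open>Since the action is by homeomorphisms, the orbit map is open for any quotient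
  topology on the orbit space.\<close>
lemma orbit_map_open:
  assumes qm: "quotient_map euclidean Q (orbit G \<phi>)" and "open V"
  shows "openin Q (orbit G \<phi> ` V)"
proof -
  have "{y. y \<in> topspace euclidean \<and> orbit G \<phi> y \<in> orbit G \<phi> ` V} = (\<Union>g\<in>carrier G. \<phi> g ` V)"
    using saturation_eq by simp
  moreover have "open (\<Union>g\<in>carrier G. \<phi> g ` V)"
    using act_open_image \<open>open V\<close> by blast
  ultimately have "openin euclidean {y. y \<in> topspace euclidean \<and> orbit G \<phi> y \<in> orbit G \<phi> ` V}"
    by simp
  moreover have "orbit G \<phi> ` V \<subseteq> topspace Q"
    using qm unfolding quotient_map_def by auto
  ultimately show ?thesis
    using qm unfolding quotient_map_def by blast
qed

lemma finite_orbit_cover: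
  fixes s :: "'a \<Rightarrow> real"
  assumes cq: "compact_orbit_space G \<phi>" and s: "\<And>x. s x > 0"
  obtains T where "finite T" "\<And>y. \<exists>g\<in>carrier G. \<exists>x\<in>T. \<exists>v\<in>ball x (s x). y = \<phi> g v"
proof -
  obtain Q where qm: "quotient_map euclidean Q (orbit G \<phi>)" and "compact_space Q"
    using cq unfolding compact_orbit_space_def by blast
  have topQ: "topspace Q = range (orbit G \<phi>)"
    using qm unfolding quotient_map_def by simp
  define \<U> where "\<U> = range (\<lambda>x. orbit G \<phi> ` ball x (s x))"
  have "\<forall>U\<in>\<U>. openin Q U"
    unfolding \<U>_def using orbit_map_open[OF qm] by simp
  moreover have "topspace Q \<subseteq> \<Union>\<U>"
  proof
    fix q assume "q \<in> topspace Q"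
    then obtain y where "q = orbit G \<phi> y"
      using topQ by blast
    moreover have "y \<in> ball y (s y)"
      using s by simp
    ultimately show "q \<in> \<Union>\<U>"
      unfolding \<U>_def by blast
  qed
  ultimately obtain \<F> where "finite \<F>" "\<F> \<subseteq> \<U>" "topspace Q \<subseteq> \<Union>\<F>"
    using compact_space_alt[THEN iffD1, rule_format, OF \<open>compact_space Q\<close>] by meson
  then obtain T where T: "finite T" "topspace Q \<subseteq> (\<Union>x\<in>T. orbit G \<phi> ` ball x (s x))"
    unfolding \<U>_def using finite_subset_image[of \<F> _ UNIV] by (metis top_greatest)
  have "\<exists>g\<in>carrier G. \<exists>x\<in>T. \<exists>v\<in>ball x (s x). y = \<phi> g v" for y
  proof -
    have "orbit G \<phi> y \<in> topspace Q"
      using topQ by simp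
    then obtain x v where xv: "x \<in> T" "v \<in> ball x (s x)" "orbit G \<phi> y = orbit G \<phi> v"
      using T(2) by blast
    then have "y \<in> orbit G \<phi> v"
      using orbit_refl[of y] by simp
    then obtain g where "g \<in> carrier G" "y = \<phi> g v"
      unfolding orbit_def by blast
    then show ?thesis
      using xv(1,2) by blast
  qed
  with T(1) show ?thesis
    by (rule that)
qed

lemma cocompact_domain:
  assumes lc: "locally_compact_space (euclidean :: 'a topology)"
    and cq: "compact_orbit_space G \<phi>"
  obtains K \<delta> where "bounded K" "\<delta> > 0" "\<And>k. k \<in> K \<Longrightarrow> compact (cball k \<delta>)"
    "\<And>x. \<exists>g\<in>carrier G. \<exists>k\<in>K. x = \<phi> g k"
proof -
  have "\<exists>t. t > 0 \<and> compact (cball x (2 * t))" for x :: 'a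
  proof -
    obtain t where "t > 0" "compact (cball x t)"
      using locally_compact_cball[OF lc] by blast
    then show ?thesis by (intro exI[of _ "t / 2"]) simp
  qed
  then obtain s :: "'a \<Rightarrow> real" where s: "\<And>x. s x > 0" "\<And>x. compact (cball x (2 * s x))"
    using choice[of "\<lambda>x t. t > 0 \<and> compact (cball x (2 * t))"] by blast
  obtain T where T: "finite T" "\<And>y. \<exists>g\<in>carrier G. \<exists>x\<in>T. \<exists>v\<in>ball x (s x). y = \<phi> g v"
    using finite_orbit_cover[where s = s, OF cq s(1)] by blast
  define K where "K = (\<Union>x\<in>T. cball x (s x))"
  define \<delta> where "\<delta> = Min (insert 1 (s ` T))"
  have \<delta>_le: "\<delta> \<le> s x" if "x \<in> T" for x
    unfolding \<delta>_def using T(1) that by simp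
  show ?thesis
  proof
    show "bounded K"
      unfolding K_def using T(1) by (intro bounded_UN) simp_all
    show "\<delta> > 0"
      unfolding \<delta>_def using T(1) s(1) by simp
  next
    fix k assume "k \<in> K"
    then obtain x where x: "x \<in> T" "dist x k \<le> s x"
      unfolding K_def by auto
    have "cball k \<delta> \<subseteq> cball x (2 * s x)"
    proof
      fix y assume "y \<in> cball k \<delta>"
      then have "dist x y \<le> s x + \<delta>"
        using x(2) dist_triangle[of x y k] by simp
      then show "y \<in> cball x (2 * s x)"
        using \<delta>_le[OF x(1)] by simp
    qed
    then show "compact (cball k \<delta>)"
      using compact_Int_closed[OF s(2)[of x] closed_cball[of k \<delta>]] by (simp add: Int_absorb1)
  next
    fix y
    obtain g x v where gxv: "g \<in> carrier G" "x \<in> T" "v \<in> ball x (s x)" "y = \<phi> g v"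
      using T(2)[of y] by blast
    moreover have "v \<in> K"
      unfolding K_def using gxv(2,3) by (auto intro: less_imp_le)
    ultimately show "\<exists>g\<in>carrier G. \<exists>k\<in>K. y = \<phi> g k"
      by blast
  qed
qed

lemma decompose_sequence:
  assumes "\<And>y. \<exists>g\<in>carrier G. \<exists>k\<in>K. y = \<phi> g k"
  obtains g k where "\<And>n. g n \<in> carrier G" "\<And>n. k n \<in> K" "\<And>n. x n = \<phi> (g n) (k n)"
proof -
  have "\<forall>n. \<exists>g. g \<in> carrier G \<and> (\<exists>k\<in>K. x n = \<phi> g k)"
    using assms by blast
  then obtain g where g: "\<forall>n. g n \<in> carrier G \<and> (\<exists>k\<in>K. x n = \<phi> (g n) k)"
    by (rule choice[THEN exE])
  then have "\<forall>n. \<exists>k. k \<in> K \<and> x n = \<phi> (g n) k"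
    by blast
  then obtain k where "\<forall>n. k n \<in> K \<and> x n = \<phi> (g n) (k n)"
    by (rule choice[THEN exE])
  with g show ?thesis
    by (intro that) simp_all
qed

text \<open>If the dilation factors \<open>ratio (g n)\<close> stay bounded below, pulling the tail
  back by a single element \<open>inv (g N)\<close> moves it into a compact ball around \<open>k N\<close>, where it
  converges; hence the sequence itself converges.\<close>
lemma Cauchy_convergent_if_ratio_bounded_below:
  assumes balls: "\<delta> > 0" "\<And>k. k \<in> K \<Longrightarrow> compact (cball k \<delta>)"
    and x: "Cauchy x" "\<And>n. g n \<in> carrier G" "\<And>n. k n \<in> K" "\<And>n. x n = \<phi> (g n) (k n)"
    and ratio_bound: "\<alpha> > 0" "\<forall>\<^sub>F n in sequentially. \<alpha> \<le> ratio (g n)"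
  shows "convergent x"
proof -
  obtain M where M: "\<And>m n. m \<ge> M \<Longrightarrow> n \<ge> M \<Longrightarrow> dist (x m) (x n) < \<alpha> * \<delta>"
    using metric_CauchyD[OF x(1), of "\<alpha> * \<delta>"] ratio_bound(1) balls(1) by auto
  obtain M' where M': "\<And>n. n \<ge> M' \<Longrightarrow> \<alpha> \<le> ratio (g n)"
    using ratio_bound(2) unfolding eventually_sequentially by blast
  define N where "N = max M M'"
  define h where "h = inv (g N)"
  have h: "h \<in> carrier G" "ratio h = inverse (ratio (g N))"
    unfolding h_def using x(2) by (simp_all add: ratio_inv)
  define y where "y n = \<phi> h (x (n + N))" for n
  have y_ball: "y n \<in> cball (k N) \<delta>" for n
  proof -
    have "k N = \<phi> h (x N)"
      unfolding h_def using x(2,4) by simp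
    then have "dist (k N) (y n) = inverse (ratio (g N)) * dist (x N) (x (n + N))"
      unfolding y_def using dist_act[OF h(1)] h(2) by simp
    also have "\<dots> \<le> inverse (ratio (g N)) * (ratio (g N) * \<delta>)"
    proof (rule mult_left_mono)
      have "dist (x N) (x (n + N)) < \<alpha> * \<delta>"
        using M[of N "n + N"] by (simp add: N_def)
      also have "\<alpha> * \<delta> \<le> ratio (g N) * \<delta>"
        using M'[of N] balls(1) by (simp add: N_def)
      finally show "dist (x N) (x (n + N)) \<le> ratio (g N) * \<delta>" by simp
    qed (use ratio_pos[OF x(2), of N] in simp)
    also have "\<dots> = \<delta>"
      using ratio_pos[OF x(2), of N] by simp
    finally show ?thesis by simp
  qed
  have "Cauchy (\<lambda>n. x (n + N))"
    using Cauchy_subseq_Cauchy[OF x(1), of "\<lambda>n. n + N"] by (simp add: strict_mono_def comp_def)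
  then have "Cauchy y"
    unfolding y_def
    by (rule uniformly_continuous_on_Cauchy[OF lipschitz_on_uniformly_continuous[OF act_lipschitz[OF h(1)]]
          _ UNIV_I])
  then obtain p where "y \<longlonglongrightarrow> p"
    using completeE[OF compact_imp_complete[OF balls(2)[OF x(3)]], of y] y_ball by blast
  then have "(\<lambda>n. \<phi> (g N) (y n)) \<longlonglongrightarrow> \<phi> (g N) p"
    by (rule continuous_on_tendsto_compose[OF lipschitz_on_continuous_on[OF act_lipschitz[OF x(2)[of N], of UNIV]]])
      simp_all
  moreover have "\<phi> (g N) (y n) = x (n + N)" for n
    unfolding y_def h_def using x(2) by simp
  ultimately have "(\<lambda>n. x (n + N)) \<longlonglongrightarrow> \<phi> (g N) p"
    by simp
  then have "x \<longlonglongrightarrow> \<phi> (g N) p"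
    by (rule LIMSEQ_offset)
  then show ?thesis
    unfolding convergent_def by blast
qed

end

section \<open>The completion of a cone-like space\<close>

locale homothety_completion = homothety_action G \<phi>
  for G :: "('g, 'c) monoid_scheme" (structure) and \<phi> :: "'g \<Rightarrow> 'a::metric_space \<Rightarrow> 'a" +
  fixes i :: "'a \<Rightarrow> 'b::complete_space"
  assumes completion: "metric_completion i"
begin

lemma isometry: "dist (i x) (i y) = dist x y"
  using completion unfolding metric_completion_def by blast

lemma tendsto_i_iff: "(\<lambda>n. i (x n)) \<longlonglongrightarrow> i p \<longleftrightarrow> x \<longlonglongrightarrow> p"
  unfolding tendsto_dist_iff[of "\<lambda>n. i (x n)"] tendsto_dist_iff[of x] isometry ..

lemma Cauchy_i_iff: "Cauchy (\<lambda>n. i (x n)) \<longleftrightarrow> Cauchy x"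
  unfolding Cauchy_def isometry ..

lemma dense_sequence:
  obtains x where "(\<lambda>n. i (x n)) \<longlonglongrightarrow> z"
proof -
  have "z \<in> closure (range i)"
    using completion unfolding metric_completion_def by simp
  then obtain y where y: "\<forall>n. y n \<in> range i" "y \<longlonglongrightarrow> z"
    unfolding closure_sequential by blast
  then have "\<forall>n. \<exists>p. y n = i p"
    by blast
  then obtain x where "\<forall>n. y n = i (x n)"
    by (rule choice[THEN exE])
  then have "y = (\<lambda>n. i (x n))"
    by (simp add: fun_eq_iff)
  then show ?thesis
    using y(2) that by simp
qed

definition attracting :: "'b \<Rightarrow> bool" where
  "attracting \<omega> \<longleftrightarrow> (\<exists>f\<in>carrier G. \<forall>x. (\<lambda>n. i ((\<phi> f ^^ n) x)) \<longlonglongrightarrow> \<omega>)"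

lemma attracting_exists: obtains \<omega> where "attracting \<omega>"
proof -
  obtain f where f: "f \<in> carrier G" "ratio f < 1"
    by (rule exists_contraction)
  have "dist (\<phi> f x) (\<phi> f y) \<le> ratio f * dist x y" for x y
    using f(1) by (simp add: dist_act)
  moreover have "0 \<le> ratio f"
    using ratio_pos[OF f(1)] by simp
  ultimately obtain \<omega> where "\<And>x. (\<lambda>n. i ((\<phi> f ^^ n) x)) \<longlonglongrightarrow> \<omega>"
    using contraction_attractor[OF _ f(2) _ isometry] by blast
  then have "attracting \<omega>"
    using f(1) unfolding attracting_def by blast
  then show ?thesis
    by (rule that)
qed

lemma act_iterate_commute:
  assumes "f \<in> carrier G" "g \<in> carrier G"
  shows "(\<phi> f ^^ n) (\<phi> g x) = \<phi> g ((\<phi> f ^^ n) x)"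
proof (induction n)
  case 0
  then show ?case by simp
next
  case (Suc n)
  have "\<phi> f (\<phi> g y) = \<phi> g (\<phi> f y)" for y
    using assms act_mult commute by metis
  with Suc show ?case by simp
qed

text \<open>Distances to an attracting point scale by the dilation factor; this is where the
  commutativity of the group enters.\<close>
lemma dist_attracting_act:
  assumes "attracting \<omega>" "g \<in> carrier G"
  shows "dist (i (\<phi> g x)) \<omega> = ratio g * dist (i x) \<omega>"
proof -
  obtain f where f: "f \<in> carrier G" "\<And>x. (\<lambda>n. i ((\<phi> f ^^ n) x)) \<longlonglongrightarrow> \<omega>"
    using assms(1) unfolding attracting_def by blast
  have "(\<lambda>n. dist (i ((\<phi> f ^^ n) (\<phi> g x))) (i (\<phi> g x))) \<longlonglongrightarrow> dist \<omega> (i (\<phi> g x))"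
    using f(2) by (intro tendsto_dist tendsto_const)
  moreover have "(\<lambda>n. dist (i ((\<phi> f ^^ n) (\<phi> g x))) (i (\<phi> g x)))
      = (\<lambda>n. ratio g * dist (i ((\<phi> f ^^ n) x)) (i x))"
    using f(1) assms(2) by (simp add: act_iterate_commute isometry dist_act)
  moreover have "(\<lambda>n. ratio g * dist (i ((\<phi> f ^^ n) x)) (i x)) \<longlonglongrightarrow> ratio g * dist \<omega> (i x)"
    using f(2) by (intro tendsto_mult tendsto_const tendsto_dist)
  ultimately have "dist \<omega> (i (\<phi> g x)) = ratio g * dist \<omega> (i x)"
    using LIMSEQ_unique by metis
  then show ?thesis
    by (simp add: dist_commute)
qed

text \<open>An attracting point is new: it would otherwise be a common fixed point of the
  free action of the nontrivial group.\<close>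
lemma attracting_not_in_range:
  assumes "attracting \<omega>"
  shows "\<omega> \<notin> range i"
proof
  assume "\<omega> \<in> range i"
  then obtain p where p: "\<omega> = i p" by blast
  have "\<phi> g p = p" if "g \<in> carrier G" for g
    using dist_attracting_act[OF assms that, of p] p isometry[of "\<phi> g p" p] by simp
  then have "carrier G \<subseteq> {\<one>}"
    using free unfolding acts_freely_def by blast
  then show False
    using nontrivial by blast
qed

text \<open>Along a sequence \<open>x n = \<phi> (g n) (k n)\<close> with \<open>k n\<close> in a bounded set and converging to a
  point \<open>z \<noteq> \<omega>\<close> of the completion, the dilation factors of \<open>g n\<close> are eventually bounded
  below: \<open>dist (i (x n)) \<omega> = ratio (g n) * dist (i (k n)) \<omega>\<close> stays away from zero while
  the second factor is bounded.\<close>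
lemma ratio_eventually_bounded_below:
  assumes \<omega>: "attracting \<omega>" and K: "bounded K"
    and gk: "\<And>n. g n \<in> carrier G" "\<And>n. k n \<in> K" "\<And>n. x n = \<phi> (g n) (k n)"
    and x: "(\<lambda>n. i (x n)) \<longlonglongrightarrow> z" and "z \<noteq> \<omega>"
  obtains \<alpha> where "\<alpha> > 0" "\<forall>\<^sub>F n in sequentially. \<alpha> \<le> ratio (g n)"
proof -
  fix a :: 'a
  obtain R where R: "\<And>k. k \<in> K \<Longrightarrow> dist a k \<le> R"
    using K unfolding bounded_any_center[of _ a] by blast
  define M where "M = \<bar>R\<bar> + dist (i a) \<omega> + 1"
  have "M > 0"
    unfolding M_def using abs_ge_zero[of R] zero_le_dist[of "i a" \<omega>] by linarith
  have M: "dist (i (k n)) \<omega> \<le> M" for n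
  proof -
    have "dist (i (k n)) \<omega> \<le> dist (i (k n)) (i a) + dist (i a) \<omega>"
      by (rule dist_triangle)
    also have "\<dots> \<le> M"
      using R[OF gk(2), of n] abs_ge_self[of R] unfolding M_def isometry by (simp add: dist_commute)
    finally show ?thesis .
  qed
  define c where "c = dist z \<omega>"
  have "c > 0"
    using \<open>z \<noteq> \<omega>\<close> unfolding c_def by simp
  have "(\<lambda>n. dist (i (x n)) \<omega>) \<longlonglongrightarrow> c"
    unfolding c_def using x by (intro tendsto_dist tendsto_const)
  moreover have "c / 2 < c"
    using \<open>c > 0\<close> by linarith
  ultimately have "\<forall>\<^sub>F n in sequentially. c / 2 < dist (i (x n)) \<omega>"
    by (rule order_tendstoD(1))
  moreover have "c / (2 * M) \<le> ratio (g n)" if "c / 2 < dist (i (x n)) \<omega>" for n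
  proof -
    have "c / 2 < ratio (g n) * dist (i (k n)) \<omega>"
      using that gk dist_attracting_act[OF \<omega> gk(1)] by simp
    also have "\<dots> \<le> ratio (g n) * M"
      using M ratio_pos[OF gk(1)] by (intro mult_left_mono) (simp_all add: less_imp_le)
    finally show ?thesis
      using \<open>M > 0\<close> by (simp add: field_simps)
  qed
  ultimately have "\<forall>\<^sub>F n in sequentially. c / (2 * M) \<le> ratio (g n)"
    by (rule eventually_mono)
  moreover have "c / (2 * M) > 0"
    using \<open>c > 0\<close> \<open>M > 0\<close> by simp
  ultimately show ?thesis
    using that by blast
qed

text \<open>A new point \<open>z \<noteq> \<omega>\<close> would
  be the limit of a Cauchy sequence \<open>x n = \<phi> (g n) (k n)\<close> with \<open>k n\<close> in the bounded set
  provided by cocompactness; the dilation factors are then bounded below, so the sequence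
  converges in the space itself and \<open>z\<close> is not new after all.\<close>
lemma new_point_is_attracting:
  assumes lc: "locally_compact_space (euclidean :: 'a topology)"
    and cq: "compact_orbit_space G \<phi>"
    and \<omega>: "attracting \<omega>" and z: "z \<notin> range i"
  shows "z = \<omega>"
proof (rule ccontr)
  assume "z \<noteq> \<omega>"
  obtain K \<delta> where K: "bounded K" "\<delta> > 0" "\<And>k. k \<in> K \<Longrightarrow> compact (cball k \<delta>)"
    "\<And>x. \<exists>g\<in>carrier G. \<exists>k\<in>K. x = \<phi> g k"
    using cocompact_domain[OF lc cq] by blast
  obtain x where x: "(\<lambda>n. i (x n)) \<longlonglongrightarrow> z"
    by (rule dense_sequence)
  obtain g k where gk: "\<And>n. g n \<in> carrier G" "\<And>n. k n \<in> K" "\<And>n. x n = \<phi> (g n) (k n)"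
    using decompose_sequence[OF K(4)] by blast
  obtain \<alpha> where \<alpha>: "\<alpha> > 0" "\<forall>\<^sub>F n in sequentially. \<alpha> \<le> ratio (g n)"
    using ratio_eventually_bounded_below[OF \<omega> K(1) gk x \<open>z \<noteq> \<omega>\<close>] by blast
  have "Cauchy x"
    using LIMSEQ_imp_Cauchy[OF x] by (simp add: Cauchy_i_iff)
  then have "convergent x"
    using Cauchy_convergent_if_ratio_bounded_below[of \<delta> K x g k \<alpha>] K(2,3) gk \<alpha> by blast
  then obtain p where "x \<longlonglongrightarrow> p"
    unfolding convergent_def by blast
  then have "(\<lambda>n. i (x n)) \<longlonglongrightarrow> i p"
    by (simp add: tendsto_i_iff)
  then have "z = i p"
    using x LIMSEQ_unique by blast
  then show False
    using z by blast
qed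

end

theorem mainTheorem2:
  fixes G :: "('g, 'c) monoid_scheme" and \<phi> :: "'g \<Rightarrow> 'a::metric_space \<Rightarrow> 'a"
    and i :: "'a \<Rightarrow> 'b::complete_space"
  assumes "cone_like G \<phi>"
    and "metric_completion i"
  shows "\<exists>\<omega>. UNIV - range i = {\<omega>}"
proof -
  have lc: "locally_compact_space (euclidean :: 'a topology)"
    and cq: "compact_orbit_space G \<phi>"
    using assms(1) unfolding cone_like_def by simp_all
  have "homothety_completion G \<phi> i"
    using assms unfolding cone_like_def homothety_completion_def homothety_completion_axioms_def
      homothety_action_def homothety_action_axioms_def by simp
  then interpret homothety_completion G \<phi> i .
  obtain \<omega> where \<omega>: "attracting \<omega>"
    by (rule attracting_exists)
  have "UNIV - range i = {\<omega>}"
    using attracting_not_in_range[OF \<omega>] new_point_is_attracting[OF lc cq \<omega>] by blast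
  then show ?thesis ..
qed

end
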